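(* Let $p$ be an even integer and let $n$ be an odd integer with $n\ge p+1\ge 5$. Then there exists a simple graph of order $n$ and size $\mathrm{ex}(n,K_{1,p})+1$ which contains exactly one copy of $K_{1,p}$.
   Context: All graphs are finite and simple. The order of a graph is its number of vertices and its size is its number of edges. A copy of $H$ in $G$ is a subgraph of $G$ isomorphic to $H$; the number of copies of $H$ in $G$ is the number of distinct subgraphs of $G$ isomorphic to $H$. For a graph $H$ and a positive integer $n$, the Turán number $\mathrm{ex}(n,H)$ is the maximum size of a simple graph of order $n$ containing no copy of $H$. $K_{1,p}$ denotes the star with $p$ edges (order $p+1$). *)

theory Defs
  imports Main
begin

definition sgraph :: "'a set \<Rightarrow> 'a set set \<Rightarrow> bool" where
  "sgraph V E \<longleftrightarrow> finite V \<and> (\<forall>e\<in>E. e \<subseteq> V \<and> card e = 2)"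

definition graph_iso :: "'a set \<Rightarrow> 'a set set \<Rightarrow> 'b set \<Rightarrow> 'b set set \<Rightarrow> bool" where
  "graph_iso V1 E1 V2 E2 \<longleftrightarrow>
     (\<exists>f. bij_betw f V1 V2 \<and> (\<forall>x\<in>V1. \<forall>y\<in>V1. {x, y} \<in> E1 \<longleftrightarrow> {f x, f y} \<in> E2))"

definition copies :: "'a set \<Rightarrow> 'a set set \<Rightarrow> 'b set \<Rightarrow> 'b set set \<Rightarrow> ('a set \<times> 'a set set) set" where
  "copies V E W F = {(V', E'). V' \<subseteq> V \<and> E' \<subseteq> E \<and> sgraph V' E' \<and> graph_iso V' E' W F}"

text \<open>Turan number: graphs of order n are taken (w.l.o.g.) on vertex set {0..<n}.\<close>
definition ex_num :: "nat \<Rightarrow> 'b set \<Rightarrow> 'b set set \<Rightarrow> nat" where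
  "ex_num n W F = Max {card E | E :: nat set set. sgraph {0..<n} E \<and> copies {0..<n} E W F = {}}"

definition star_V :: "nat \<Rightarrow> nat set" where
  "star_V p = {0..p}"

definition star_E :: "nat \<Rightarrow> nat set set" where
  "star_E p = {{0, i} | i. i \<in> {1..p}}"

end

theory Submission
  imports Defs
begin

text \<open>A graph contains a copy of \<open>K\<^sub>1\<^sub>,\<^sub>p\<close> exactly when some vertex has degree at least \<open>p\<close>, so by
  the handshake lemma a \<open>K\<^sub>1\<^sub>,\<^sub>p\<close>-free graph of order \<open>n\<close> has at most \<open>n(p - 1)/2\<close> edges. For odd
  \<open>n\<close> and even \<open>p\<close> this number is a half-integer. Take \<open>n = 2k + 1\<close>, \<open>p = 2r + 2\<close> and on
  \<open>\<int>/n\<close> the circulant graph with distances \<open>\<plusminus>1, \<dots>, \<plusminus>r\<close>, augmented by the matching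
  \<open>{x, x + k + 1}\<close> (\<open>0 \<le> x < k\<close>) and the edge \<open>{0, k}\<close>: vertex \<open>0\<close> has degree \<open>p\<close> and all other
  vertices degree \<open>p - 1\<close>. Its only copy of \<open>K\<^sub>1\<^sub>,\<^sub>p\<close> is the full star at \<open>0\<close>, and deleting one
  edge at \<open>0\<close> leaves a \<open>K\<^sub>1\<^sub>,\<^sub>p\<close>-free graph with \<open>\<lfloor>n(p - 1)/2\<rfloor>\<close> edges, which is therefore
  extremal.\<close>

definition neighbours :: "'a set set \<Rightarrow> 'a \<Rightarrow> 'a set" where
  "neighbours E c = {x. {c, x} \<in> E}"

lemma sgraph_finite_edges: "sgraph V E \<Longrightarrow> finite E"
  unfolding sgraph_def by (meson Pow_iff finite_Pow_iff rev_finite_subset subsetI)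

lemma neighbours_subset:
  assumes "sgraph V E" and "x \<in> neighbours E c"
  shows "x \<in> V \<and> c \<in> V \<and> x \<noteq> c"
proof -
  have "{c, x} \<subseteq> V" "card {c, x} = 2"
    using assms unfolding sgraph_def neighbours_def by auto
  then show ?thesis by (cases "x = c") auto
qed

lemma finite_neighbours: "sgraph V E \<Longrightarrow> finite (neighbours E c)"
  using neighbours_subset unfolding sgraph_def by (metis finite_subset subsetI)

lemma card_neighbours_eq:
  assumes "sgraph V E"
  shows "card (neighbours E v) = card {e \<in> E. v \<in> e}"
proof -
  have "(\<lambda>x. {v, x}) ` neighbours E v = {e \<in> E. v \<in> e}"
  proof
    show "{e \<in> E. v \<in> e} \<subseteq> (\<lambda>x. {v, x}) ` neighbours E v"
    proof
      fix e assume e: "e \<in> {e \<in> E. v \<in> e}"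
      then obtain a b where "e = {a, b}"
        using assms unfolding sgraph_def by (auto simp: card_2_iff)
      then have "e = {v, if a = v then b else a}" using e by auto
      then show "e \<in> (\<lambda>x. {v, x}) ` neighbours E v" using e unfolding neighbours_def by auto
    qed
  qed (auto simp: neighbours_def)
  moreover have "inj_on (\<lambda>x. {v, x}) (neighbours E v)"
    by (auto simp: inj_on_def doubleton_eq_iff)
  ultimately show ?thesis by (metis card_image)
qed

lemma sum_card_neighbours:
  assumes sg: "sgraph V E"
  shows "(\<Sum>v\<in>V. card (neighbours E v)) = 2 * card E"
proof -
  have fV: "finite V" using sg sgraph_def by blast
  have "(\<Sum>v\<in>V. card (neighbours E v)) = (\<Sum>v\<in>V. \<Sum>e\<in>E. if v \<in> e then 1 else 0)"
    using card_neighbours_eq[OF sg] sgraph_finite_edges[OF sg]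
    by (simp add: sum.inter_filter[symmetric])
  also have "\<dots> = (\<Sum>e\<in>E. \<Sum>v\<in>V. if v \<in> e then 1 else 0)" by (rule sum.swap)
  also have "\<dots> = (\<Sum>e\<in>E. card e)"
  proof (rule sum.cong)
    fix e assume "e \<in> E"
    then have "{v \<in> V. v \<in> e} = e" using sg unfolding sgraph_def by blast
    then show "(\<Sum>v\<in>V. if v \<in> e then 1 else 0) = card e"
      using sum.inter_filter[OF fV, of "\<lambda>_. 1::nat" "\<lambda>v. v \<in> e"] by simp
  qed simp
  also have "\<dots> = (\<Sum>e\<in>E. 2)" using sg sgraph_def by (intro sum.cong) auto
  finally show ?thesis by simp
qed

lemma star_E_doubleton_iff:
  "{a, b} \<in> star_E p \<longleftrightarrow> (a = 0 \<and> b \<in> {1..p}) \<or> (b = 0 \<and> a \<in> {1..p})"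
  unfolding star_E_def by (auto simp: doubleton_eq_iff)

lemma star_copyI:
  assumes sg: "sgraph V E" and "c \<in> V" and S: "S \<subseteq> neighbours E c" "card S = p"
  shows "(insert c S, {{c, x} | x. x \<in> S}) \<in> copies V E (star_V p) (star_E p)"
proof -
  have fS: "finite S" and cS: "c \<notin> S"
    using S finite_neighbours[OF sg] neighbours_subset[OF sg] finite_subset by blast+
  obtain g where g: "bij_betw g S {1..p}"
    using finite_same_card_bij[OF fS, of "{1..p}"] S by auto
  define f where "f x = (if x = c then 0 else g x)" for x
  have fS': "bij_betw f S {1..p}"
    using g cS by (subst bij_betw_cong[where g = g]) (auto simp: f_def)
  then have f_leaf: "x \<in> insert c S \<Longrightarrow> f x \<in> {1..p} \<longleftrightarrow> x \<in> S" for x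
    using cS by (auto simp: f_def bij_betw_def)
  have f_centre: "x \<in> insert c S \<Longrightarrow> f x = 0 \<longleftrightarrow> x = c" for x
    using g unfolding f_def bij_betw_def by force
  have "bij_betw f (S \<union> {c}) ({1..p} \<union> {f c})"
    using notIn_Un_bij_betw[OF cS _ fS'] by (simp add: f_def)
  moreover have "{1..p} \<union> {f c} = {0..p}" by (auto simp: f_def)
  ultimately have "bij_betw f (insert c S) {0..p}" by simp
  moreover have "{x, y} \<in> {{c, x} | x. x \<in> S} \<longleftrightarrow> {f x, f y} \<in> star_E p"
    if "x \<in> insert c S" "y \<in> insert c S" for x y
    unfolding star_E_doubleton_iff f_leaf[OF that(1)] f_leaf[OF that(2)]
      f_centre[OF that(1)] f_centre[OF that(2)]
    using cS by (auto simp: doubleton_eq_iff)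
  moreover have "sgraph (insert c S) {{c, x} | x. x \<in> S}"
    unfolding sgraph_def using fS cS by (auto simp: card_insert_if)
  moreover have "insert c S \<subseteq> V" "{{c, x} | x. x \<in> S} \<subseteq> E"
    using \<open>c \<in> V\<close> S(1) neighbours_subset[OF sg] unfolding neighbours_def by auto
  ultimately show ?thesis unfolding copies_def graph_iso_def star_V_def by blast
qed

lemma star_copyE:
  assumes "(V', E') \<in> copies V E (star_V p) (star_E p)"
  obtains c S where "c \<in> V" "V' = insert c S" "c \<notin> S" "card S = p" "S \<subseteq> neighbours E c"
    "E' = {{c, x} | x. x \<in> S}"
proof -
  from assms obtain f where sub: "V' \<subseteq> V" "E' \<subseteq> E" and sg: "sgraph V' E'"
    and bf: "bij_betw f V' {0..p}"
    and iso: "\<forall>x\<in>V'. \<forall>y\<in>V'. {x, y} \<in> E' \<longleftrightarrow> {f x, f y} \<in> star_E p"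
    unfolding copies_def graph_iso_def star_V_def by auto
  obtain c where c: "c \<in> V'" "f c = 0"
    using bf by (metis atLeastAtMost_iff bij_betw_iff_bijections le0)
  define S where "S = V' - {c}"
  have inj: "inj_on f V'" using bf bij_betw_def by blast
  have "card V' = p + 1" using bij_betw_same_card[OF bf] by simp
  then have cS: "card S = p"
    unfolding S_def using c sg sgraph_def by simp
  have leaf: "f x \<in> {1..p}" if "x \<in> S" for x
  proof -
    have "f x \<noteq> 0" using that c inj unfolding S_def by (metis DiffE inj_on_eq_iff singletonI)
    moreover have "f x \<in> {0..p}" using that bf bij_betwE unfolding S_def by blast
    ultimately show ?thesis by auto
  qed
  have edge: "{c, x} \<in> E'" if "x \<in> S" for x
    using iso c leaf[OF that] that unfolding S_def star_E_doubleton_iff by auto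
  have "E' \<subseteq> {{c, x} | x. x \<in> S}"
  proof
    fix e assume e: "e \<in> E'"
    then obtain x y where xy: "e = {x, y}" "x \<noteq> y" "x \<in> V'" "y \<in> V'"
      using sg unfolding sgraph_def by (auto simp: card_2_iff)
    then have "{f x, f y} \<in> star_E p" using iso e by auto
    then have "f x = 0 \<or> f y = 0" unfolding star_E_doubleton_iff by auto
    then have "x = c \<or> y = c" using inj c xy by (metis inj_on_eq_iff)
    then show "e \<in> {{c, x} | x. x \<in> S}" using xy unfolding S_def by auto
  qed
  then have "E' = {{c, x} | x. x \<in> S}" using edge by auto
  moreover have "S \<subseteq> neighbours E c" using edge sub unfolding neighbours_def by auto
  moreover have "V' = insert c S" "c \<notin> S" using c unfolding S_def by auto
  ultimately show ?thesis using that cS c sub by blast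
qed

lemma star_free_iff_card_neighbours_less:
  assumes sg: "sgraph V E"
  shows "copies V E (star_V p) (star_E p) = {} \<longleftrightarrow> (\<forall>v\<in>V. card (neighbours E v) < p)"
proof
  assume free: "copies V E (star_V p) (star_E p) = {}"
  show "\<forall>v\<in>V. card (neighbours E v) < p"
  proof (rule ccontr)
    assume "\<not> (\<forall>v\<in>V. card (neighbours E v) < p)"
    then obtain v S where "v \<in> V" "S \<subseteq> neighbours E v" "card S = p"
      by (meson not_less obtain_subset_with_card_n)
    then show False using star_copyI[OF sg] free by blast
  qed
next
  assume deg: "\<forall>v\<in>V. card (neighbours E v) < p"
  show "copies V E (star_V p) (star_E p) = {}"
  proof (rule ccontr)
    assume "copies V E (star_V p) (star_E p) \<noteq> {}"
    then obtain V' E' where "(V', E') \<in> copies V E (star_V p) (star_E p)" by auto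
    then obtain c S where "c \<in> V" "card S = p" "S \<subseteq> neighbours E c"
      by (rule star_copyE) blast
    then show False using deg card_mono[OF finite_neighbours[OF sg]] by (metis not_le)
  qed
qed

lemma star_free_card_edges_le:
  assumes "sgraph V E" and "copies V E (star_V p) (star_E p) = {}"
  shows "2 * card E \<le> card V * (p - 1)"
proof -
  have "2 * card E = (\<Sum>v\<in>V. card (neighbours E v))"
    using sum_card_neighbours[OF assms(1)] by simp
  also have "\<dots> \<le> (\<Sum>v\<in>V. p - 1)"
    using assms star_free_iff_card_neighbours_less by (intro sum_mono) fastforce
  finally show ?thesis by simp
qed

lemma ex_num_star_eqI:
  assumes "sgraph {0..<n} E" and "copies {0..<n} E (star_V p) (star_E p) = {}"
    and "n * (p - 1) < 2 * card E + 2"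
  shows "ex_num n (star_V p) (star_E p) = card E"
  unfolding ex_num_def
proof (rule Max_eqI)
  show "finite {card E | E :: nat set set. sgraph {0..<n} E \<and> copies {0..<n} E (star_V p) (star_E p) = {}}"
    by (rule finite_subset[where B = "card ` Pow (Pow {0..<n})"]) (auto simp: sgraph_def)
  show "card E \<in> {card E | E. sgraph {0..<n} E \<and> copies {0..<n} E (star_V p) (star_E p) = {}}"
    using assms by blast
  show "m \<le> card E" if "m \<in> {card E | E. sgraph {0..<n} E \<and> copies {0..<n} E (star_V p) (star_E p) = {}}"
    for m
    using that star_free_card_edges_le[where V = "{0..<n}"] assms(3) by fastforce
qed

lemma copies_star_unique_centre:
  assumes sg: "sgraph V E" and "c \<in> V" and deg_c: "card (neighbours E c) = p"
    and deg: "\<forall>v\<in>V - {c}. card (neighbours E v) < p"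
  shows "copies V E (star_V p) (star_E p) = {(insert c (neighbours E c), {{c, x} | x. x \<in> neighbours E c})}"
proof
  show "{(insert c (neighbours E c), {{c, x} | x. x \<in> neighbours E c})} \<subseteq> copies V E (star_V p) (star_E p)"
    using star_copyI[OF sg \<open>c \<in> V\<close> _ deg_c] by simp
  show "copies V E (star_V p) (star_E p) \<subseteq> {(insert c (neighbours E c), {{c, x} | x. x \<in> neighbours E c})}"
  proof
    fix C assume C_copy: "C \<in> copies V E (star_V p) (star_E p)"
    obtain V' E' where "C = (V', E')" by fastforce
    with C_copy obtain c' S where c': "c' \<in> V" "C = (insert c' S, {{c', x} | x. x \<in> S})"
      and S: "card S = p" "S \<subseteq> neighbours E c'"
      by (auto elim: star_copyE)
    have "p \<le> card (neighbours E c')" using S card_mono[OF finite_neighbours[OF sg]] by metis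
    then have "c' = c" using deg c'(1) by (meson DiffI leD singletonD)
    then have "S = neighbours E c" using card_subset_eq[OF finite_neighbours[OF sg]] S deg_c by metis
    then show "C \<in> {(insert c (neighbours E c), {{c, x} | x. x \<in> neighbours E c})}"
      using c' \<open>c' = c\<close> by simp
  qed
qed

lemma star_free_Diff_centre_edge:
  assumes sg: "sgraph V E" and deg_c: "card (neighbours E c) = p"
    and deg: "\<forall>v\<in>V - {c}. card (neighbours E v) < p" and b: "b \<in> neighbours E c"
  shows "copies V (E - {{c, b}}) (star_V p) (star_E p) = {}"
proof -
  have sg': "sgraph V (E - {{c, b}})" using sg unfolding sgraph_def by auto
  have "neighbours (E - {{c, b}}) c \<subseteq> neighbours E c - {b}"
    unfolding neighbours_def by auto
  then have "card (neighbours (E - {{c, b}}) c) < p"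
    using b deg_c finite_neighbours[OF sg]
    by (metis card_Diff1_less card_mono finite_Diff order_le_less_trans)
  moreover have "card (neighbours (E - {{c, b}}) v) \<le> card (neighbours E v)" for v
    by (rule card_mono[OF finite_neighbours[OF sg]]) (auto simp: neighbours_def)
  ultimately show ?thesis
    unfolding star_free_iff_card_neighbours_less[OF sg'] using deg by (metis DiffI le_less_trans singletonD)
qed

locale odd_circulant =
  fixes n k r :: nat
  assumes n_eq: "n = 2 * k + 1" and r_less_k: "r < k"
begin

definition cyc_dist :: "nat \<Rightarrow> nat \<Rightarrow> nat" where
  "cyc_dist x y = (if x \<le> y then y - x else y + n - x)"

definition short_dists :: "nat set" where
  "short_dists = {1..r} \<union> {n - r..n - 1}"

text \<open>Besides the short distances, every \<open>x \<le> k\<close> is joined to \<open>x + k + 1\<close>, and every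
  \<open>x \<ge> k + 1\<close> to \<open>x + k \<equiv> x - (k + 1)\<close>, the same edge seen from its other end; only \<open>0\<close>
  has both long distances, its extra edge \<open>{0, k}\<close> coinciding with the long edge of \<open>k\<close>.\<close>
definition dists :: "nat \<Rightarrow> nat set" where
  "dists x = short_dists \<union> (if x \<le> k then {k + 1} else {}) \<union> (if x = 0 \<or> k + 1 \<le> x then {k} else {})"

definition adj :: "nat \<Rightarrow> nat \<Rightarrow> bool" where
  "adj x y \<longleftrightarrow> x < n \<and> y < n \<and> cyc_dist x y \<in> dists x"

definition edges :: "nat set set" where
  "edges = {{x, y} | x y. adj x y}"

lemma mem_dists_iff:
  "d \<in> dists x \<longleftrightarrow> (1 \<le> d \<and> d \<le> r) \<or> (n - r \<le> d \<and> d \<le> n - 1)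
     \<or> (x \<le> k \<and> d = k + 1) \<or> ((x = 0 \<or> k + 1 \<le> x) \<and> d = k)"
  unfolding dists_def short_dists_def by auto

lemma not_adj_self: "\<not> adj x x"
  using n_eq r_less_k unfolding adj_def mem_dists_iff cyc_dist_def by auto

lemma dists_swap:
  assumes "x < y" and "y < n"
  shows "y - x \<in> dists x \<longleftrightarrow> x + n - y \<in> dists y"
  unfolding mem_dists_iff using assms n_eq r_less_k by linarith

lemma adj_sym:
  assumes "adj x y"
  shows "adj y x"
proof -
  have "x \<noteq> y" using assms not_adj_self by auto
  then show ?thesis
    using assms dists_swap[of x y] dists_swap[of y x] unfolding adj_def cyc_dist_def
    by (auto split: if_splits)
qed

lemma doubleton_mem_edges_iff: "{x, y} \<in> edges \<longleftrightarrow> adj x y"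
  unfolding edges_def using adj_sym by (auto simp: doubleton_eq_iff)

lemma sgraph_edges: "sgraph {0..<n} edges"
proof -
  have "{x, y} \<subseteq> {0..<n} \<and> card {x, y} = 2" if "adj x y" for x y
    using that not_adj_self[of x] by (cases "x = y") (auto simp: adj_def)
  then show ?thesis unfolding sgraph_def edges_def by auto
qed

lemma card_neighbours_edges_eq_card_dists:
  assumes x: "x < n"
  shows "card (neighbours edges x) = card (dists x)"
proof -
  have "neighbours edges x = (\<lambda>d. (x + d) mod n) ` dists x"
  proof (intro set_eqI iffI)
    fix y assume "y \<in> neighbours edges x"
    then have "y < n" "cyc_dist x y \<in> dists x"
      unfolding neighbours_def doubleton_mem_edges_iff adj_def by auto
    moreover have "y = (x + cyc_dist x y) mod n"
      using \<open>y < n\<close> x unfolding cyc_dist_def by (auto simp: mod_if)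
    ultimately show "y \<in> (\<lambda>d. (x + d) mod n) ` dists x" by blast
  next
    fix y assume "y \<in> (\<lambda>d. (x + d) mod n) ` dists x"
    then obtain d where d: "d \<in> dists x" "y = (x + d) mod n" by auto
    moreover have "d < n" using d(1) n_eq r_less_k unfolding mem_dists_iff by auto
    ultimately have "y < n" "cyc_dist x y = d" using x unfolding cyc_dist_def by (auto simp: mod_if)
    then show "y \<in> neighbours edges x"
      unfolding neighbours_def doubleton_mem_edges_iff adj_def using d x by auto
  qed
  moreover have "inj_on (\<lambda>d. (x + d) mod n) (dists x)"
  proof (rule inj_onI)
    fix a b assume "a \<in> dists x" "b \<in> dists x" "(x + a) mod n = (x + b) mod n"
    moreover have "a < n" "b < n" using calculation(1,2) n_eq r_less_k unfolding mem_dists_iff by auto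
    ultimately show "a = b" using x by (auto simp: mod_if split: if_splits)
  qed
  ultimately show ?thesis by (simp add: card_image)
qed

lemma card_dists: "card (dists x) = (if x = 0 then 2 * r + 2 else 2 * r + 1)"
proof -
  have "{1..r} \<inter> {n - r..n - 1} = {}" "card {n - r..n - 1} = r" using n_eq r_less_k by auto
  then have "card short_dists = 2 * r" unfolding short_dists_def by (simp add: card_Un_disjoint)
  moreover have "k \<notin> short_dists" "k + 1 \<notin> short_dists" "finite short_dists"
    unfolding short_dists_def using n_eq r_less_k by auto
  ultimately show ?thesis unfolding dists_def by (auto simp: card_insert_if)
qed

lemma card_neighbours_edges:
  "x < n \<Longrightarrow> card (neighbours edges x) = (if x = 0 then 2 * r + 2 else 2 * r + 1)"
  using card_neighbours_edges_eq_card_dists card_dists by simp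

lemma card_edges: "2 * card edges = n * (2 * r + 1) + 1"
proof -
  have "2 * card edges = (\<Sum>v\<in>{0..<n}. card (neighbours edges v))"
    using sum_card_neighbours[OF sgraph_edges] by simp
  also have "\<dots> = (\<Sum>v\<in>{0..<n}. (2 * r + 1) + (if v = 0 then 1 else 0))"
    by (rule sum.cong) (auto simp: card_neighbours_edges)
  also have "\<dots> = (\<Sum>v\<in>{0..<n}. 2 * r + 1) + (\<Sum>v\<in>{0..<n}. if v = 0 then 1 else 0)"
    by (rule sum.distrib)
  also have "\<dots> = n * (2 * r + 1) + 1"
    using n_eq by (simp only: sum.delta) simp
  finally show ?thesis .
qed

end

theorem theorem1:
  fixes p n :: nat
  assumes "even p" and "odd n" and "n \<ge> p + 1" and "p + 1 \<ge> 5"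
  shows "\<exists>E :: nat set set. sgraph {0..<n} E
           \<and> card E = ex_num n (star_V p) (star_E p) + 1
           \<and> card (copies {0..<n} E (star_V p) (star_E p)) = 1"
proof -
  define r where "r = p div 2 - 1"
  define k where "k = n div 2"
  have p: "p = 2 * r + 2" using assms(1,4) unfolding r_def by auto
  have "n = 2 * k + 1" using assms(2) unfolding k_def by simp
  interpret odd_circulant n k r
    by unfold_locales (use \<open>n = 2 * k + 1\<close> assms(3) p in linarith)+
  have "0 \<in> {0..<n}" using n_eq by simp
  have deg_0: "card (neighbours edges 0) = p"
    using card_neighbours_edges[of 0] \<open>0 \<in> {0..<n}\<close> p by simp
  have deg: "\<forall>v\<in>{0..<n} - {0}. card (neighbours edges v) < p"
    using card_neighbours_edges p by simp
  obtain b where b: "b \<in> neighbours edges 0"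
    using deg_0 p by fastforce
  define E0 where "E0 = edges - {{0, b}}"
  have "card E0 + 1 = card edges"
    using card_Suc_Diff1[OF sgraph_finite_edges[OF sgraph_edges], of "{0, b}"] b
    unfolding E0_def neighbours_def by simp
  then have "n * (p - 1) < 2 * card E0 + 2" using card_edges p by simp
  moreover have "sgraph {0..<n} E0" using sgraph_edges unfolding sgraph_def E0_def by auto
  ultimately have "ex_num n (star_V p) (star_E p) = card E0"
    using ex_num_star_eqI star_free_Diff_centre_edge[OF sgraph_edges deg_0 deg b]
    unfolding E0_def by blast
  moreover have "card (copies {0..<n} edges (star_V p) (star_E p)) = 1"
    using copies_star_unique_centre[OF sgraph_edges \<open>0 \<in> {0..<n}\<close> deg_0 deg] by simp
  ultimately show ?thesis using sgraph_edges \<open>card E0 + 1 = card edges\<close> by auto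
qed

end
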